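(* Let $w\in\mathcal S_n$. For $a\in\mathrm R(w)$ put $t(a)=|\mathrm{sup}(a)|$ (which depends only on $[a]$). Define a relation on the commutation classes of $\mathrm R(w)$ as the transitive closure of the covering relations $[a]<[b]$ whenever $[a]$ and $[b]$ are adjacent in $C(w)$ and $t(b)=t(a)+1$. This is a partial order making the vertex set of $C(w)$ a ranked poset with rank function $t$, with a unique minimal element $[a_{\min}]$ and a unique maximal element $[a_{\max}]$.
   Context: Permutations are in one-line notation; $\mathrm{Des}(u)=\{i:u_i>u_{i+1}\}$. A word $a=a_1\cdots a_\ell$ with letters in $\{1,\dots,n-1\}$ acts on a word of length $n$ by successively swapping the entries in positions $a_j$ and $a_j+1$. $\mathrm R(w)$: reduced words of $w$ (length $\ell(w)$ = number of inversions, action on $12\cdots n$ yields $w$). Commutation: replace a factor $ij$, $|i-j|\ge2$, by $ji$; long braid relation: replace $i(i+1)i$ by $(i+1)i(i+1)$ or vice versa; $[a]$ is the commutation class of $a$. $C(w)$: vertices are commutation classes, $[a]\ne[b]$ adjacent if some $a'\in[a]$, $b'\in[b]$ differ by one long braid relation. $a_{\min}$ (resp. $a_{\max}$): set $w^0=w$, for $j=0,\dots,\ell(w)-1$ let $i_j$ be the smallest (resp. largest) element of $\mathrm{Des}(w^j)$ and obtain $w^{j+1}$ by swapping entries in positions $i_j,i_j+1$; the word is $i_{\ell(w)-1}\cdots i_0$. For an inversion $(p,q)$ of $w$, $P_a(p,q)$ is the index of the step of $a$ swapping $p$ and $q$. $\mathrm T_w$: triples $(x,y,z)$, $x<y<z$,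 with $z,y,x$ in this order in $w$. $\Gamma(a,(x,y,z))=1$ if $P_a(y,x)>P_a(z,y)$, else $0$. $\mathrm{sup}(a)=\{\tau\in\mathrm T_w:\Gamma(a,\tau)=1\}$. *)

theory Defs
  imports Main
begin

(* permutations of {1..n} in one-line notation, as lists *)
definition is_perm :: "nat \<Rightarrow> nat list \<Rightarrow> bool" where
  "is_perm n w \<longleftrightarrow> length w = n \<and> distinct w \<and> set w = {1..n}"

definition id_word :: "nat \<Rightarrow> nat list" where
  "id_word n = [1..<n+1]"

(* swap the entries in (1-based) positions i and i+1 *)
definition swap_at :: "nat \<Rightarrow> nat list \<Rightarrow> nat list" where
  "swap_at i u = u[i - 1 := u ! i, i := u ! (i - 1)]"

(* action of a word a_1 ... a_l: a_1 is applied first *)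
definition act :: "nat list \<Rightarrow> nat list \<Rightarrow> nat list" where
  "act a u = fold swap_at a u"

definition Des :: "nat list \<Rightarrow> nat set" where
  "Des u = {i. 1 \<le> i \<and> i < length u \<and> u ! (i - 1) > u ! i}"

definition len :: "nat list \<Rightarrow> nat" where
  "len w = card {(i, j). i < j \<and> j < length w \<and> w ! i > w ! j}"

definition reduced_words :: "nat \<Rightarrow> nat list \<Rightarrow> nat list set" where
  "reduced_words n w = {a. set a \<subseteq> {1..n-1} \<and> length a = len w \<and> act a (id_word n) = w}"

definition comm_step :: "nat list \<Rightarrow> nat list \<Rightarrow> bool" where
  "comm_step a b \<longleftrightarrow> (\<exists>xs ys i j. (i \<ge> j + 2 \<or> j \<ge> i + 2) \<and>
      a = xs @ [i, j] @ ys \<and> b = xs @ [j, i] @ ys)"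

definition comm_equiv :: "nat list \<Rightarrow> nat list \<Rightarrow> bool" where
  "comm_equiv = comm_step\<^sup>*\<^sup>*"

definition cclass :: "nat list \<Rightarrow> nat list set" where
  "cclass a = {b. comm_equiv a b}"

definition braid_step :: "nat list \<Rightarrow> nat list \<Rightarrow> bool" where
  "braid_step a b \<longleftrightarrow> (\<exists>xs ys i.
      (a = xs @ [i, i+1, i] @ ys \<and> b = xs @ [i+1, i, i+1] @ ys) \<or>
      (a = xs @ [i+1, i, i+1] @ ys \<and> b = xs @ [i, i+1, i] @ ys))"

definition vertices :: "nat \<Rightarrow> nat list \<Rightarrow> nat list set set" where
  "vertices n w = cclass ` reduced_words n w"

definition adjacent :: "nat list set \<Rightarrow> nat list set \<Rightarrow> bool" where
  "adjacent A B \<longleftrightarrow> A \<noteq> B \<and> (\<exists>a\<in>A. \<exists>b\<in>B. braid_step a b)"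

definition amin_iter :: "nat list \<Rightarrow> nat \<Rightarrow> nat list" where
  "amin_iter w j = ((\<lambda>u. swap_at (Min (Des u)) u) ^^ j) w"

definition amax_iter :: "nat list \<Rightarrow> nat \<Rightarrow> nat list" where
  "amax_iter w j = ((\<lambda>u. swap_at (Max (Des u)) u) ^^ j) w"

definition a_min :: "nat list \<Rightarrow> nat list" where
  "a_min w = rev (map (\<lambda>j. Min (Des (amin_iter w j))) [0..<len w])"

definition a_max :: "nat list \<Rightarrow> nat list" where
  "a_max w = rev (map (\<lambda>j. Max (Des (amax_iter w j))) [0..<len w])"

(* the set of the two values swapped at step j (0-based) of a acting on 12...n *)
definition swapped :: "nat \<Rightarrow> nat list \<Rightarrow> nat \<Rightarrow> nat set" where
  "swapped n a j = (let u = act (take j a) (id_word n); i = a ! j in {u ! (i - 1), u ! i})"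

definition P :: "nat \<Rightarrow> nat list \<Rightarrow> nat \<Rightarrow> nat \<Rightarrow> nat" where
  "P n a p q = (LEAST j. j < length a \<and> swapped n a j = {p, q})"

definition triples :: "nat list \<Rightarrow> (nat \<times> nat \<times> nat) set" where
  "triples w = {(x, y, z). x < y \<and> y < z \<and>
      (\<exists>i j k. i < j \<and> j < k \<and> k < length w \<and> w ! i = z \<and> w ! j = y \<and> w ! k = x)}"

definition Gamma :: "nat \<Rightarrow> nat list \<Rightarrow> nat \<times> nat \<times> nat \<Rightarrow> nat" where
  "Gamma n a \<tau> = (case \<tau> of (x, y, z) \<Rightarrow> if P n a y x > P n a z y then 1 else 0)"

definition supp :: "nat list \<Rightarrow> nat list \<Rightarrow> (nat \<times> nat \<times> nat) set" where
  "supp w a = {\<tau> \<in> triples w. Gamma (length w) a \<tau> = 1}"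

definition tstat :: "nat list \<Rightarrow> nat list \<Rightarrow> nat" where
  "tstat w a = card (supp w a)"

definition cover :: "nat \<Rightarrow> nat list \<Rightarrow> nat list set \<Rightarrow> nat list set \<Rightarrow> bool" where
  "cover n w A B \<longleftrightarrow> A \<in> vertices n w \<and> B \<in> vertices n w \<and> adjacent A B \<and>
     (\<exists>a\<in>A. \<exists>b\<in>B. tstat w b = tstat w a + 1)"

definition tord :: "nat \<Rightarrow> nat list \<Rightarrow> (nat list set \<times> nat list set) set" where
  "tord n w = {(A, B). A \<in> vertices n w \<and> B \<in> vertices n w \<and> (cover n w)\<^sup>*\<^sup>* A B}"

definition covers_in :: "'a set \<Rightarrow> ('a \<times> 'a) set \<Rightarrow> 'a \<Rightarrow> 'a \<Rightarrow> bool" where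
  "covers_in V r A B \<longleftrightarrow> A \<in> V \<and> B \<in> V \<and> (A, B) \<in> r \<and> A \<noteq> B \<and>
     \<not> (\<exists>C\<in>V. C \<noteq> A \<and> C \<noteq> B \<and> (A, C) \<in> r \<and> (C, B) \<in> r)"

definition minimal_elts :: "'a set \<Rightarrow> ('a \<times> 'a) set \<Rightarrow> 'a set" where
  "minimal_elts V r = {A \<in> V. \<forall>B\<in>V. (B, A) \<in> r \<longrightarrow> B = A}"

definition maximal_elts :: "'a set \<Rightarrow> ('a \<times> 'a) set \<Rightarrow> 'a set" where
  "maximal_elts V r = {A \<in> V. \<forall>B\<in>V. (A, B) \<in> r \<longrightarrow> B = A}"

end

theory Submission
  imports Defs
begin

(*
  Reading a reduced word from the right peels off descents: a @ [k] is a reduced word of w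
  iff k is a descent of w and a is a reduced word of w s_k.  Along this recursion the pairs
  swapped by a are exactly the inversions of w, each swapped once, and t obeys
  t_w(a k) = t_{w s_k}(a) + #{entries to the left of w(k) that exceed w(k)}.
  Consequently t is constant on commutation classes, and the long braid move
  i(i+1)i -> (i+1)i(i+1) raises it by exactly one.  So t strictly increases along chains of
  covering relations, which makes the relation antisymmetric and graded by t.
  Finally, by induction on the length of w, every reduced word is reached from a_min, and
  reaches a_max, by commutations and t-increasing braid moves: the last letter is moved to the
  first (resp. last) descent of w, by a commutation when it is far from it and by a single
  braid move when it is adjacent to it.
*)

section \<open>Adjacent transpositions and inversions\<close>

lemma length_swap_at [simp]: "length (swap_at k u) = length u"
  by (simp add: swap_at_def)

lemma nth_swap_at:
  assumes "1 \<le> k" "k < length u" "i < length u"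
  shows "swap_at k u ! i = (if i = k - 1 then u ! k else if i = k then u ! (k - 1) else u ! i)"
  using assms by (auto simp: swap_at_def nth_list_update)

lemma set_swap_at [simp]: "1 \<le> k \<Longrightarrow> k < length u \<Longrightarrow> set (swap_at k u) = set u"
  unfolding swap_at_def by (rule set_swap) auto

lemma distinct_swap_at [simp]: "1 \<le> k \<Longrightarrow> k < length u \<Longrightarrow> distinct (swap_at k u) = distinct u"
  unfolding swap_at_def by (rule distinct_swap) auto

lemma swap_at_swap_at [simp]: "1 \<le> k \<Longrightarrow> k < length u \<Longrightarrow> swap_at k (swap_at k u) = u"
  by (rule nth_equalityI) (auto simp: nth_swap_at)

lemma swap_at_commute:
  assumes "1 \<le> i" "1 \<le> j" "i < length u" "j < length u" "i \<ge> j + 2 \<or> j \<ge> i + 2"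
  shows "swap_at i (swap_at j u) = swap_at j (swap_at i u)"
  by (rule nth_equalityI) (use assms in \<open>auto simp: nth_swap_at\<close>)

lemma swap_at_braid:
  assumes "1 \<le> i" "i + 1 < length u"
  shows "swap_at i (swap_at (i + 1) (swap_at i u)) = swap_at (i + 1) (swap_at i (swap_at (i + 1) u))"
  by (rule nth_equalityI) (use assms in \<open>auto simp: nth_swap_at\<close>)

lemma take_swap_at_le: "m \<le> k - 1 \<Longrightarrow> take m (swap_at k u) = take m u"
  by (simp add: swap_at_def)

lemma take_swap_at_less: "1 \<le> k \<Longrightarrow> k < m \<Longrightarrow> take m (swap_at k u) = swap_at k (take m u)"
  by (simp add: swap_at_def take_update_swap)

lemma is_perm_swap_at: "is_perm n w \<Longrightarrow> 1 \<le> k \<Longrightarrow> k < n \<Longrightarrow> is_perm n (swap_at k w)"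
  by (simp add: is_perm_def)

definition pos :: "'a list \<Rightarrow> 'a \<Rightarrow> nat" where
  "pos u x = (LEAST i. i < length u \<and> u ! i = x)"

lemma pos_nth [simp]: "distinct u \<Longrightarrow> i < length u \<Longrightarrow> pos u (u ! i) = i"
  unfolding pos_def by (rule Least_equality) (auto simp: nth_eq_iff_index_eq)

lemma pos_less_length: "x \<in> set u \<Longrightarrow> pos u x < length u"
  and nth_pos [simp]: "x \<in> set u \<Longrightarrow> u ! pos u x = x"
  unfolding pos_def in_set_conv_nth by (metis (mono_tags, lifting) LeastI)+

lemma eq_nth_iff_pos_eq: "distinct u \<Longrightarrow> x \<in> set u \<Longrightarrow> i < length u \<Longrightarrow> x = u ! i \<longleftrightarrow> pos u x = i"
  by (metis nth_pos pos_nth)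

definition swap_index :: "nat \<Rightarrow> nat \<Rightarrow> nat" where
  "swap_index k i = (if i = k - 1 then k else if i = k then k - 1 else i)"

lemma swap_index_less_iff:
  assumes "1 \<le> k" "i \<noteq> j"
  shows "swap_index k i < swap_index k j \<longleftrightarrow> (if {i, j} = {k - 1, k} then j < i else i < j)"
  using assms by (auto simp: swap_index_def doubleton_eq_iff)

lemma pos_swap_at:
  assumes "distinct u" "1 \<le> k" "k < length u" "x \<in> set u"
  shows "pos (swap_at k u) x = swap_index k (pos u x)"
proof -
  have "swap_index k (pos u x) < length u" "swap_at k u ! swap_index k (pos u x) = x"
    using assms pos_less_length[OF assms(4)]
    by (auto simp: swap_index_def nth_swap_at eq_nth_iff_pos_eq[symmetric])
  then show ?thesis
    using assms by (metis distinct_swap_at length_swap_at pos_nth)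
qed

definition precedes :: "'a list \<Rightarrow> 'a \<Rightarrow> 'a \<Rightarrow> bool" where
  "precedes u x y \<longleftrightarrow> x \<in> set u \<and> y \<in> set u \<and> pos u x < pos u y"

lemma precedes_nth_iff:
  assumes "distinct u" "i < length u" "j < length u"
  shows "precedes u (u ! i) (u ! j) \<longleftrightarrow> i < j"
  using assms by (simp add: precedes_def)

lemma precedes_nth_iff_take:
  assumes "distinct u" "m < length u"
  shows "precedes u x (u ! m) \<longleftrightarrow> x \<in> set (take m u)"
proof
  assume "precedes u x (u ! m)"
  then show "x \<in> set (take m u)"
    using assms by (auto simp: precedes_def in_set_conv_nth intro!: exI[of _ "pos u x"] pos_less_length)
next
  assume "x \<in> set (take m u)"
  then obtain i where "i < m" "u ! i = x"
    using assms(2) by (auto simp: in_set_conv_nth)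
  then show "precedes u x (u ! m)"
    using assms by (auto simp: precedes_def)
qed

lemma precedes_swap_at:
  assumes "distinct u" "1 \<le> k" "k < length u"
  shows "precedes (swap_at k u) x y \<longleftrightarrow>
    (if {x, y} = {u ! (k - 1), u ! k} then precedes u y x else precedes u x y)"
proof (cases "x \<in> set u \<and> y \<in> set u \<and> x \<noteq> y")
  case True
  then have ne: "pos u x \<noteq> pos u y"
    by (metis nth_pos)
  have "{x, y} = {u ! (k - 1), u ! k} \<longleftrightarrow> {pos u x, pos u y} = {k - 1, k}"
    using assms True by (auto simp: doubleton_eq_iff eq_nth_iff_pos_eq)
  moreover have "precedes (swap_at k u) x y \<longleftrightarrow> swap_index k (pos u x) < swap_index k (pos u y)"
    using assms True by (simp add: precedes_def pos_swap_at)
  ultimately show ?thesis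
    using assms(2) ne True by (simp add: swap_index_less_iff precedes_def)
next
  case False
  then show ?thesis
    using assms by (auto simp: precedes_def)
qed

definition inversions :: "nat list \<Rightarrow> (nat \<times> nat) set" where
  "inversions u = {(x, y). x < y \<and> precedes u y x}"

lemma finite_inversions: "finite (inversions u)"
  by (rule finite_subset[of _ "set u \<times> set u"]) (auto simp: inversions_def precedes_def)

lemma inversions_swap_at:
  assumes "distinct u" "1 \<le> k" "k < length u"
  shows "inversions (swap_at k u) =
    (if u ! (k - 1) < u ! k then insert (u ! (k - 1), u ! k) (inversions u)
     else inversions u - {(u ! k, u ! (k - 1))})"
proof -
  have "u ! (k - 1) \<noteq> u ! k" "precedes u (u ! (k - 1)) (u ! k)" "\<not> precedes u (u ! k) (u ! (k - 1))"
    using assms by (auto simp: nth_eq_iff_index_eq precedes_nth_iff)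
  then show ?thesis
    using assms by (auto simp: inversions_def precedes_swap_at doubleton_eq_iff)
qed

lemma len_eq_card_inversions:
  assumes "distinct u"
  shows "len u = card (inversions u)"
proof -
  let ?pairs = "{(i, j). i < j \<and> j < length u \<and> u ! i > u ! j}"
  have "bij_betw (\<lambda>(i, j). (u ! j, u ! i)) ?pairs (inversions u)"
  proof (rule bij_betw_imageI)
    show "inj_on (\<lambda>(i, j). (u ! j, u ! i)) ?pairs"
      using assms by (auto simp: inj_on_def nth_eq_iff_index_eq)
    have "(x, y) \<in> (\<lambda>(i, j). (u ! j, u ! i)) ` ?pairs" if "(x, y) \<in> inversions u" for x y
    proof (rule rev_image_eqI)
      show "(pos u y, pos u x) \<in> ?pairs"
        using that pos_less_length[of x u] by (auto simp: inversions_def precedes_def)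
    qed (use that in \<open>auto simp: inversions_def precedes_def\<close>)
    then show "(\<lambda>(i, j). (u ! j, u ! i)) ` ?pairs = inversions u"
      using assms by (auto simp: inversions_def precedes_def)
  qed
  then show ?thesis
    unfolding len_def by (rule bij_betw_same_card)
qed

lemma len_swap_at:
  assumes "distinct u" "1 \<le> k" "k < length u"
  shows "len (swap_at k u) = (if u ! (k - 1) < u ! k then len u + 1 else len u - 1)"
    and "u ! k < u ! (k - 1) \<Longrightarrow> len u \<ge> 1"
proof -
  have "u ! (k - 1) \<noteq> u ! k"
    using assms by (simp add: nth_eq_iff_index_eq)
  moreover have "(u ! (k - 1), u ! k) \<notin> inversions u" "u ! k < u ! (k - 1) \<Longrightarrow> (u ! k, u ! (k - 1)) \<in> inversions u"
    using assms by (auto simp: inversions_def precedes_nth_iff)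
  ultimately show "len (swap_at k u) = (if u ! (k - 1) < u ! k then len u + 1 else len u - 1)"
    and "u ! k < u ! (k - 1) \<Longrightarrow> len u \<ge> 1"
    using assms finite_inversions
    by (auto simp: len_eq_card_inversions inversions_swap_at card_gt_0_iff Suc_le_eq)
qed

section \<open>Descents and reduced words\<close>

lemma act_Nil [simp]: "act [] u = u"
  by (simp add: act_def)

lemma act_snoc [simp]: "act (a @ [k]) u = swap_at k (act a u)"
  by (simp add: act_def)

lemma act_append: "act (a @ b) u = act b (act a u)"
  by (simp add: act_def)

lemma is_perm_act: "is_perm n u \<Longrightarrow> set a \<subseteq> {1..n - 1} \<Longrightarrow> is_perm n (act a u)"
  by (induction a rule: rev_induct) (auto simp: is_perm_swap_at)

lemma is_perm_id_word: "is_perm n (id_word n)"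
  by (simp add: is_perm_def id_word_def atLeastLessThanSuc_atLeastAtMost del: upt_Suc)

lemma sorted_id_word: "sorted (id_word n)"
  by (simp add: id_word_def del: upt_Suc)

lemma nth_id_word: "i < n \<Longrightarrow> id_word n ! i = Suc i"
  by (simp add: id_word_def del: upt_Suc)

lemma len_id_word: "len (id_word n) = 0"
proof -
  have "length (id_word n) = n"
    by (simp add: id_word_def)
  then have "{(i, j). i < j \<and> j < length (id_word n) \<and> id_word n ! i > id_word n ! j} = {}"
    by (auto simp: nth_id_word)
  then show ?thesis
    unfolding len_def by (metis card.empty)
qed

lemma len_act_id_word_le: "set a \<subseteq> {1..n - 1} \<Longrightarrow> len (act a (id_word n)) \<le> length a"
proof (induction a rule: rev_induct)
  case Nil
  then show ?case by (simp add: len_id_word)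
next
  case (snoc k a)
  then have "is_perm n (act a (id_word n))"
    by (intro is_perm_act is_perm_id_word) auto
  with snoc show ?case
    by (auto simp: is_perm_def len_swap_at)
qed

lemma finite_Des: "finite (Des u)"
  by (rule finite_subset[of _ "{..<length u}"]) (auto simp: Des_def)

lemma is_perm_swap_at_Des: "is_perm n w \<Longrightarrow> k \<in> Des w \<Longrightarrow> is_perm n (swap_at k w)"
  by (simp add: is_perm_swap_at is_perm_def Des_def)

lemma len_swap_at_Des:
  assumes "is_perm n w" "k \<in> Des w"
  shows "len w = Suc (len (swap_at k w))"
  using assms len_swap_at[of w k] by (auto simp: is_perm_def Des_def)

lemma Des_empty_imp_id_word:
  assumes "is_perm n w" "Des w = {}"
  shows "w = id_word n"
proof (rule sorted_distinct_set_unique)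
  have "\<not> w ! i > w ! Suc i" if "Suc i < length w" for i
  proof
    assume "w ! i > w ! Suc i"
    then have "Suc i \<in> Des w"
      using that by (simp add: Des_def)
    then show False
      using assms(2) by simp
  qed
  then show "sorted w"
    unfolding sorted_iff_nth_Suc by (simp add: not_less)
qed (use assms(1) is_perm_id_word sorted_id_word in \<open>auto simp: is_perm_def\<close>)

lemma Des_nonempty_iff_len:
  assumes "is_perm n w"
  shows "Des w \<noteq> {} \<longleftrightarrow> len w \<noteq> 0"
proof
  assume "Des w \<noteq> {}"
  then obtain k where "k \<in> Des w"
    by blast
  then show "len w \<noteq> 0"
    using len_swap_at_Des[OF assms] by simp
next
  assume "len w \<noteq> 0"
  then show "Des w \<noteq> {}"
    using Des_empty_imp_id_word[OF assms] len_id_word by auto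
qed

lemma mem_Des_swap_at_far:
  assumes "1 \<le> k" "k < length u" "l + 1 < k \<or> k + 1 < l"
  shows "l \<in> Des (swap_at k u) \<longleftrightarrow> l \<in> Des u"
proof (cases "1 \<le> l \<and> l < length u")
  case True
  then have "swap_at k u ! l = u ! l" "swap_at k u ! (l - 1) = u ! (l - 1)"
    using assms by (auto simp: nth_swap_at)
  then show ?thesis
    by (simp add: Des_def)
qed (auto simp: Des_def)

lemma nth_less_of_no_Des:
  assumes "distinct u" "i < j" "j < length u" "\<forall>l. i < l \<and> l \<le> j \<longrightarrow> l \<notin> Des u"
  shows "u ! i < u ! j"
  using assms(2-4)
proof (induction j)
  case 0
  then show ?case by simp
next
  case (Suc j)
  have "u ! j \<noteq> u ! Suc j"
    using assms(1) Suc.prems(2) by (simp add: nth_eq_iff_index_eq)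
  moreover have "\<not> u ! j > u ! Suc j"
    using Suc.prems by (auto simp: Des_def)
  ultimately have "u ! j < u ! Suc j"
    by simp
  then show ?case
    using Suc by (cases "i = j") auto
qed

lemma Min_Des_swap_at:
  assumes "k \<in> Des w" "Min (Des w) < k"
  shows "Min (Des w) \<in> Des (swap_at k w)" and "Min (Des (swap_at k w)) = Min (Des w)"
proof -
  let ?d = "Min (Des w)"
  have d: "?d \<in> Des w" "\<forall>l \<in> Des w. ?d \<le> l"
    using assms(1) finite_Des by (auto intro: Min_in)
  have k: "1 \<le> k" "k < length w" "w ! k < w ! (k - 1)"
    using assms(1) by (simp_all add: Des_def)
  show d': "?d \<in> Des (swap_at k w)"
  proof (cases "?d + 1 < k")
    case True
    then show ?thesis
      using mem_Des_swap_at_far[of k w ?d] k d(1) by simp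
  next
    case False
    then have "k = ?d + 1"
      using assms(2) by simp
    then show ?thesis
      using d(1) k by (auto simp: Des_def nth_swap_at)
  qed
  have "l \<notin> Des (swap_at k w)" if "l < ?d" for l
    using mem_Des_swap_at_far[of k w l] k d(2) that assms(2) by force
  then show "Min (Des (swap_at k w)) = ?d"
    using d' by (meson Min_eqI finite_Des not_le)
qed

lemma Max_Des_swap_at:
  assumes "k \<in> Des w" "k < Max (Des w)"
  shows "Max (Des w) \<in> Des (swap_at k w)" and "Max (Des (swap_at k w)) = Max (Des w)"
proof -
  let ?d = "Max (Des w)"
  have d: "?d \<in> Des w" "\<forall>l \<in> Des w. l \<le> ?d"
    using assms(1) finite_Des by (auto intro: Max_in)
  have k: "1 \<le> k" "k < length w" "w ! k < w ! (k - 1)"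
    using assms(1) by (simp_all add: Des_def)
  show d': "?d \<in> Des (swap_at k w)"
  proof (cases "k + 1 < ?d")
    case True
    then show ?thesis
      using mem_Des_swap_at_far[of k w ?d] k d(1) by simp
  next
    case False
    then have "?d = k + 1"
      using assms(2) by simp
    then show ?thesis
      using d(1) k by (auto simp: Des_def nth_swap_at)
  qed
  have "l \<notin> Des (swap_at k w)" if "?d < l" for l
    using mem_Des_swap_at_far[of k w l] k d(2) that assms(2) by force
  then show "Max (Des (swap_at k w)) = ?d"
    using d' by (meson Max_eqI finite_Des not_le)
qed

lemma reduced_words_snoc_iff:
  assumes "is_perm n w"
  shows "a @ [k] \<in> reduced_words n w \<longleftrightarrow> k \<in> Des w \<and> a \<in> reduced_words n (swap_at k w)"
proof
  assume R: "a @ [k] \<in> reduced_words n w"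
  let ?v = "act a (id_word n)"
  have k: "1 \<le> k" "k < n" and a: "set a \<subseteq> {1..n - 1}"
    and len_w: "len w = Suc (length a)" and w: "w = swap_at k ?v"
    using R by (auto simp: reduced_words_def)
  have v: "length ?v = n" "distinct ?v"
    using is_perm_act[OF is_perm_id_word a] by (auto simp: is_perm_def)
  have "len ?v \<le> length a"
    using a by (rule len_act_id_word_le)
  then have asc: "?v ! (k - 1) < ?v ! k"
    using len_swap_at(1)[of ?v k] v k len_w w by (auto split: if_splits)
  have "k \<in> Des w"
    using asc k v by (simp add: w Des_def nth_swap_at)
  moreover have "len (swap_at k w) = length a"
    using len_swap_at(1)[of ?v k] asc k v len_w w by simp
  ultimately show "k \<in> Des w \<and> a \<in> reduced_words n (swap_at k w)"
    using a k v w by (auto simp: reduced_words_def)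
next
  assume "k \<in> Des w \<and> a \<in> reduced_words n (swap_at k w)"
  moreover have "length w = n"
    using assms by (simp add: is_perm_def)
  ultimately show "a @ [k] \<in> reduced_words n w"
    using len_swap_at_Des[OF assms] by (auto simp: reduced_words_def Des_def)
qed

lemma reduced_words_snocD:
  assumes "is_perm n w" "a @ [k] \<in> reduced_words n w"
  shows "k \<in> Des w" and "a \<in> reduced_words n (swap_at k w)" and "is_perm n (swap_at k w)"
  using assms by (simp_all add: reduced_words_snoc_iff is_perm_swap_at_Des)

lemma Nil_in_reduced_words_iff: "[] \<in> reduced_words n w \<longleftrightarrow> w = id_word n"
  by (auto simp: reduced_words_def len_id_word)

lemma inversions_Des:
  assumes "is_perm n w" "k \<in> Des w"
  shows "inversions w = insert (w ! k, w ! (k - 1)) (inversions (swap_at k w))"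
    and "(w ! k, w ! (k - 1)) \<notin> inversions (swap_at k w)"
proof -
  have k: "1 \<le> k" "k < length w" "w ! k < w ! (k - 1)" and "distinct w"
    using assms by (auto simp: Des_def is_perm_def)
  then have "inversions (swap_at k w) = inversions w - {(w ! k, w ! (k - 1))}"
    by (simp add: inversions_swap_at)
  moreover have "(w ! k, w ! (k - 1)) \<in> inversions w"
    using k \<open>distinct w\<close> by (simp add: inversions_def precedes_nth_iff)
  ultimately show "inversions w = insert (w ! k, w ! (k - 1)) (inversions (swap_at k w))"
    and "(w ! k, w ! (k - 1)) \<notin> inversions (swap_at k w)"
    by auto
qed

lemma inversions_id_word: "inversions (id_word n) = {}"
  using len_eq_card_inversions[of "id_word n"] is_perm_id_word[of n] len_id_word[of n] finite_inversions
  by (simp add: is_perm_def)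

section \<open>The statistic along a reduced word\<close>

lemma swapped_snoc_less: "j < length a \<Longrightarrow> swapped n (a @ [k]) j = swapped n a j"
  by (simp add: swapped_def nth_append)

lemma swapped_snoc_length:
  "swapped n (a @ [k]) (length a) = {act a (id_word n) ! (k - 1), act a (id_word n) ! k}"
  by (simp add: swapped_def Let_def)

lemma swapped_snoc_reduced_word:
  assumes "is_perm n w" "a @ [k] \<in> reduced_words n w"
  shows "swapped n (a @ [k]) (length a) = {w ! k, w ! (k - 1)}"
proof -
  have "k \<in> Des w" "a \<in> reduced_words n (swap_at k w)"
    using assms reduced_words_snoc_iff by blast+
  then have "act a (id_word n) = swap_at k w"
    by (simp add: reduced_words_def)
  then have "swapped n (a @ [k]) (length a) = {swap_at k w ! (k - 1), swap_at k w ! k}"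
    by (simp only: swapped_snoc_length)
  then show ?thesis
    using assms(1) \<open>k \<in> Des w\<close> by (auto simp: nth_swap_at Des_def is_perm_def)
qed

lemma swapped_in_inversions:
  assumes "is_perm n w" "a \<in> reduced_words n w" "j < length a"
  shows "\<exists>x y. (x, y) \<in> inversions w \<and> swapped n a j = {x, y}"
  using assms
proof (induction a arbitrary: w rule: rev_induct)
  case Nil
  then show ?case by simp
next
  case (snoc k a)
  note k = reduced_words_snocD[OF snoc.prems(1,2)]
  show ?case
  proof (cases "j < length a")
    case True
    then show ?thesis
      using snoc.IH[OF k(3,2)] inversions_Des(1)[OF snoc.prems(1) k(1)]
      by (auto simp: swapped_snoc_less)
  next
    case False
    then have "j = length a"
      using snoc.prems(3) by simp
    then show ?thesis
      using inversions_Des(1)[OF snoc.prems(1) k(1)] swapped_snoc_reduced_word[OF snoc.prems(1,2)]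
      by auto
  qed
qed

lemma inversion_swapped:
  assumes "is_perm n w" "a \<in> reduced_words n w" "(x, y) \<in> inversions w"
  shows "\<exists>j<length a. swapped n a j = {x, y}"
  using assms
proof (induction a arbitrary: w rule: rev_induct)
  case Nil
  then show ?case
    by (simp add: Nil_in_reduced_words_iff inversions_id_word)
next
  case (snoc k a)
  note k = reduced_words_snocD[OF snoc.prems(1,2)]
  show ?case
  proof (cases "(x, y) = (w ! k, w ! (k - 1))")
    case True
    then show ?thesis
      using swapped_snoc_reduced_word[OF snoc.prems(1,2)] by auto
  next
    case False
    then have "(x, y) \<in> inversions (swap_at k w)"
      using snoc.prems(3) inversions_Des(1)[OF snoc.prems(1) k(1)] by blast
    then obtain j where "j < length a" "swapped n a j = {x, y}"
      using snoc.IH[OF k(3,2)] by blast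
    then show ?thesis
      by (metis swapped_snoc_less length_append_singleton less_SucI)
  qed
qed

lemma Least_cong_below:
  fixes Q R :: "nat \<Rightarrow> bool"
  assumes "Q j" "j < m" "\<And>i. i < m \<Longrightarrow> Q i \<longleftrightarrow> R i"
  shows "Least Q = Least R" and "Least Q < m"
proof -
  show less: "Least Q < m"
    using Least_le[of Q j] assms(1,2) by simp
  then have "R (Least Q)"
    using LeastI[of Q j] assms by simp
  then have "Least R \<le> Least Q"
    by (rule Least_le)
  then have "Q (Least R)"
    using LeastI[of R "Least Q"] \<open>R (Least Q)\<close> less assms(3) by simp
  then show "Least Q = Least R"
    using Least_le[of Q "Least R"] \<open>Least R \<le> Least Q\<close> by simp
qed

lemma P_commute: "P n a x y = P n a y x"
  by (simp add: P_def insert_commute)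

lemma P_snoc_inversion:
  assumes "is_perm n w" "a @ [k] \<in> reduced_words n w" "(x, y) \<in> inversions (swap_at k w)"
  shows "P n (a @ [k]) x y = P n a x y" and "P n a x y < length a"
proof -
  note k = reduced_words_snocD[OF assms(1,2)]
  obtain j where "j < length a" "swapped n a j = {x, y}"
    using inversion_swapped[OF k(3,2) assms(3)] by blast
  let ?Q = "\<lambda>i. i < length a \<and> swapped n a i = {x, y}"
  let ?R = "\<lambda>i. i < length (a @ [k]) \<and> swapped n (a @ [k]) i = {x, y}"
  have "i < length a \<Longrightarrow> ?Q i \<longleftrightarrow> ?R i" for i
    by (auto simp: swapped_snoc_less)
  then have "Least ?Q = Least ?R" "Least ?Q < length a"
    using Least_cong_below[of ?Q j "length a" ?R] \<open>j < length a\<close> \<open>swapped n a j = {x, y}\<close>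
    by blast+
  then show "P n (a @ [k]) x y = P n a x y" and "P n a x y < length a"
    by (simp_all add: P_def)
qed

lemma P_snoc_length:
  assumes "is_perm n w" "a @ [k] \<in> reduced_words n w"
  shows "P n (a @ [k]) (w ! k) (w ! (k - 1)) = length a"
  unfolding P_def
proof (rule Least_equality)
  show "length a < length (a @ [k]) \<and> swapped n (a @ [k]) (length a) = {w ! k, w ! (k - 1)}"
    using swapped_snoc_reduced_word[OF assms] by simp
next
  fix j
  assume j: "j < length (a @ [k]) \<and> swapped n (a @ [k]) j = {w ! k, w ! (k - 1)}"
  note k = reduced_words_snocD[OF assms]
  show "length a \<le> j"
  proof (rule ccontr)
    assume "\<not> length a \<le> j"
    then obtain x y where "(x, y) \<in> inversions (swap_at k w)" "{x, y} = {w ! k, w ! (k - 1)}"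
      using swapped_in_inversions[OF k(3,2)] j
      by (metis not_le swapped_snoc_less)
    moreover have "w ! k < w ! (k - 1)"
      using k(1) by (simp add: Des_def)
    ultimately show False
      using inversions_Des(2)[OF assms(1) k(1)] by (auto simp: doubleton_eq_iff inversions_def)
  qed
qed

lemma triples_iff_inversions:
  assumes "distinct u"
  shows "(x, y, z) \<in> triples u \<longleftrightarrow> (x, y) \<in> inversions u \<and> (y, z) \<in> inversions u"
proof
  assume "(x, y, z) \<in> triples u"
  then show "(x, y) \<in> inversions u \<and> (y, z) \<in> inversions u"
    using assms by (auto simp: triples_def inversions_def precedes_nth_iff)
next
  assume "(x, y) \<in> inversions u \<and> (y, z) \<in> inversions u"
  then have "x < y" "y < z" "pos u z < pos u y" "pos u y < pos u x" "pos u x < length u"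
    "u ! pos u z = z" "u ! pos u y = y" "u ! pos u x = x"
    by (auto simp: inversions_def precedes_def pos_less_length)
  then show "(x, y, z) \<in> triples u"
    unfolding triples_def by blast
qed

lemma finite_triples: "finite (triples u)"
  by (rule finite_subset[of _ "set u \<times> set u \<times> set u"]) (auto simp: triples_def)

lemma mem_supp_iff:
  assumes "distinct w"
  shows "(x, y, z) \<in> supp w a \<longleftrightarrow> (x, y) \<in> inversions w \<and> (y, z) \<in> inversions w \<and>
    P (length w) a z y < P (length w) a y x"
  using assms by (simp add: supp_def Gamma_def triples_iff_inversions)

definition larger_before :: "nat list \<Rightarrow> nat \<Rightarrow> nat" where
  "larger_before u m = card {z \<in> set (take m u). u ! m < z}"

lemma larger_before_step:
  assumes "distinct u" "1 \<le> m" "m < length u"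
  shows "larger_before u m =
    card {z \<in> set (take (m - 1) u). u ! m < z} + (if u ! m < u ! (m - 1) then 1 else 0)"
proof -
  let ?S = "{z \<in> set (take (m - 1) u). u ! m < z}"
  have "take m u = take (m - 1) u @ [u ! (m - 1)]"
    using assms take_Suc_conv_app_nth[of "m - 1" u] by simp
  then have "{z \<in> set (take m u). u ! m < z} =
      (if u ! m < u ! (m - 1) then insert (u ! (m - 1)) ?S else ?S)"
    by auto
  moreover have "u ! (m - 1) \<notin> set (take (m - 1) u)"
    using assms precedes_nth_iff_take[of u "m - 1" "u ! (m - 1)"] by (simp add: precedes_def)
  ultimately show ?thesis
    by (simp add: larger_before_def card_insert_if)
qed

lemma supp_snoc:
  assumes w: "is_perm n w" and R: "a @ [k] \<in> reduced_words n w"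
  defines "p \<equiv> w ! (k - 1)" and "q \<equiv> w ! k"
  shows "supp w (a @ [k]) =
    supp (swap_at k w) a \<union> (\<lambda>z. (q, p, z)) ` {z \<in> set (take (k - 1) w). p < z}"
proof -
  let ?w = "swap_at k w" and ?b = "a @ [k]"
  note k = reduced_words_snocD(1)[OF w R]
  have "distinct w" "length w = n" "1 \<le> k" "k < n" "q < p"
    using w k by (auto simp: is_perm_def Des_def p_def q_def)
  then have w': "distinct ?w" "length ?w = n"
    by simp_all
  note inv = inversions_Des[OF w k, folded p_def q_def]
  note P_old = P_snoc_inversion[OF w R]
  have P_new: "P n ?b p q = length a"
    using P_snoc_length[OF w R] by (simp add: P_commute p_def q_def)
  have before: "(p, z) \<in> inversions ?w \<longleftrightarrow> z \<in> set (take (k - 1) w) \<and> p < z" for z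
  proof -
    have "(p, z) \<in> inversions w \<longleftrightarrow> z \<in> set (take (k - 1) w) \<and> p < z"
      using precedes_nth_iff_take[of w "k - 1" z] \<open>distinct w\<close> \<open>k < n\<close> \<open>length w = n\<close>
      by (auto simp: inversions_def p_def)
    then show ?thesis
      using inv \<open>q < p\<close> by auto
  qed
  show ?thesis
  proof (rule set_eqI, clarify)
    fix x y z
    \<comment> \<open>a triple of w is either a triple of w s_k or contains the new inversion (q, p)\<close>
    consider "(x, y) = (q, p)" | "(y, z) = (q, p)" | "(x, y) \<in> inversions ?w" "(y, z) \<in> inversions ?w"
      | "(x, y) \<notin> inversions w \<or> (y, z) \<notin> inversions w"
      using inv by blast
    then show "(x, y, z) \<in> supp w ?b \<longleftrightarrow>
        (x, y, z) \<in> supp ?w a \<union> (\<lambda>z. (q, p, z)) ` {z \<in> set (take (k - 1) w). p < z}"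
    proof cases
      case 1
      then show ?thesis
        using inv P_new P_old[of p z] before[of z] \<open>q < p\<close> \<open>distinct w\<close> w'
        by (auto simp: mem_supp_iff \<open>length w = n\<close> P_commute[of n _ z p])
    next
      case 2
      then show ?thesis
        using inv P_new P_old[of x q] \<open>q < p\<close> \<open>distinct w\<close> w'
        by (auto simp: mem_supp_iff \<open>length w = n\<close> P_commute[of n _ p q] P_commute[of n _ q x])
    next
      case 3
      then show ?thesis
        using inv P_old[of x y] P_old[of y z] \<open>distinct w\<close> w'
        by (auto simp: mem_supp_iff \<open>length w = n\<close> P_commute[of n _ y x] P_commute[of n _ z y])
    next
      case 4
      then show ?thesis
        using inv \<open>distinct w\<close> w' before[of z]
        by (auto simp: mem_supp_iff \<open>length w = n\<close>)
    qed
  qed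
qed

lemma tstat_snoc:
  assumes w: "is_perm n w" and R: "a @ [k] \<in> reduced_words n w"
  shows "tstat w (a @ [k]) = tstat (swap_at k w) a + larger_before w (k - 1)"
proof -
  let ?w = "swap_at k w" and ?new = "(\<lambda>z. (w ! k, w ! (k - 1), z)) ` {z \<in> set (take (k - 1) w). w ! (k - 1) < z}"
  note k = reduced_words_snocD(1)[OF w R]
  then have "distinct ?w"
    using w by (simp add: is_perm_def Des_def)
  then have "supp ?w a \<inter> ?new = {}"
    using inversions_Des(2)[OF w k] by (auto simp: mem_supp_iff)
  moreover have "finite (supp ?w a)"
    using finite_triples[of ?w] by (simp add: supp_def)
  moreover have "card ?new = larger_before w (k - 1)"
    by (simp add: larger_before_def card_image inj_on_def)
  ultimately show ?thesis
    unfolding tstat_def supp_snoc[OF w R] by (simp add: card_Un_disjoint)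
qed

lemma tstat_snoc3:
  assumes w: "is_perm n w" and R: "e @ [i, j, k] \<in> reduced_words n w"
  shows "tstat w (e @ [i, j, k]) = tstat (act e (id_word n)) e +
    larger_before (swap_at j (swap_at k w)) (i - 1) + larger_before (swap_at k w) (j - 1) +
    larger_before w (k - 1)"
proof -
  have R1: "(e @ [i, j]) @ [k] \<in> reduced_words n w"
    using R by simp
  note s1 = reduced_words_snocD[OF w R1]
  have R2: "(e @ [i]) @ [j] \<in> reduced_words n (swap_at k w)"
    using s1(2) by simp
  note s2 = reduced_words_snocD[OF s1(3) R2]
  note s3 = reduced_words_snocD[OF s2(3) s2(2)]
  have "act e (id_word n) = swap_at i (swap_at j (swap_at k w))"
    using s3(2) by (simp add: reduced_words_def)
  then show ?thesis
    using tstat_snoc[OF w R1] tstat_snoc[OF s1(3) R2] tstat_snoc[OF s2(3) s2(2)] by simp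
qed

section \<open>Commutation and braid moves\<close>

lemma comm_step_sym: "comm_step a b \<Longrightarrow> comm_step b a"
  unfolding comm_step_def by blast

lemma braid_step_sym: "braid_step a b \<Longrightarrow> braid_step b a"
  unfolding braid_step_def by blast

lemma comm_step_append: "comm_step a b \<Longrightarrow> comm_step (a @ c) (b @ c)"
  unfolding comm_step_def by fastforce

lemma braid_step_append: "braid_step a b \<Longrightarrow> braid_step (a @ c) (b @ c)"
  unfolding braid_step_def by fastforce

lemma reduced_words_replace_factor:
  assumes "xs @ u @ ys \<in> reduced_words n w" "length v = length u" "set v \<subseteq> {1..n - 1}"
    and "act v (act xs (id_word n)) = act u (act xs (id_word n))"
  shows "xs @ v @ ys \<in> reduced_words n w"
  using assms by (auto simp: reduced_words_def act_append)

lemma comm_step_reduced_words: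
  assumes "a \<in> reduced_words n w" "comm_step a b"
  shows "b \<in> reduced_words n w"
proof -
  obtain xs ys i j where ij: "i \<ge> j + 2 \<or> j \<ge> i + 2" "a = xs @ [i, j] @ ys" "b = xs @ [j, i] @ ys"
    using assms(2) unfolding comm_step_def by blast
  have "set (xs @ [i, j]) \<subseteq> {1..n - 1}"
    using assms(1) ij(2) by (auto simp: reduced_words_def)
  moreover from this have "length (act xs (id_word n)) = n"
    using is_perm_act[OF is_perm_id_word, of xs n] by (simp add: is_perm_def)
  ultimately show ?thesis
    using reduced_words_replace_factor[of xs "[i, j]" ys n w "[j, i]"] assms(1) ij
    by (auto simp: act_def swap_at_commute)
qed

lemma braid_step_reduced_words:
  assumes "a \<in> reduced_words n w" "braid_step a b"
  shows "b \<in> reduced_words n w"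
proof -
  obtain xs ys i where xs: "a = xs @ [i, i + 1, i] @ ys \<and> b = xs @ [i + 1, i, i + 1] @ ys \<or>
      a = xs @ [i + 1, i, i + 1] @ ys \<and> b = xs @ [i, i + 1, i] @ ys"
    using assms(2) unfolding braid_step_def by blast
  let ?t = "act xs (id_word n)"
  have "set xs \<subseteq> {1..n - 1}" "1 \<le> i" "i + 1 < n"
    using assms(1) xs by (auto simp: reduced_words_def)
  then have "act [i, i + 1, i] ?t = act [i + 1, i, i + 1] ?t"
    using swap_at_braid[of i ?t] is_perm_act[OF is_perm_id_word, of xs n]
    by (simp add: act_def is_perm_def)
  moreover have "set [i, i + 1, i] \<subseteq> {1..n - 1}" "set [i + 1, i, i + 1] \<subseteq> {1..n - 1}"
    using \<open>1 \<le> i\<close> \<open>i + 1 < n\<close> by auto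
  ultimately show ?thesis
    using reduced_words_replace_factor[of xs "[i, i + 1, i]" ys n w "[i + 1, i, i + 1]"]
      reduced_words_replace_factor[of xs "[i + 1, i, i + 1]" ys n w "[i, i + 1, i]"] assms(1) xs
    by (metis length_Cons)
qed

lemma larger_before_swap_at_far:
  assumes "1 \<le> i" "1 \<le> j" "i < length u" "j < length u" "i \<ge> j + 2 \<or> j \<ge> i + 2"
  shows "larger_before (swap_at j u) (i - 1) = larger_before u (i - 1)"
proof -
  have "swap_at j u ! (i - 1) = u ! (i - 1)"
    using assms by (auto simp: nth_swap_at)
  moreover have "set (take (i - 1) (swap_at j u)) = set (take (i - 1) u)"
    using assms by (auto simp: take_swap_at_le take_swap_at_less)
  ultimately show ?thesis
    by (simp add: larger_before_def)
qed

lemma tstat_comm: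
  assumes "is_perm n w" "xs @ [i, j] @ ys \<in> reduced_words n w" "i \<ge> j + 2 \<or> j \<ge> i + 2"
  shows "tstat w (xs @ [i, j] @ ys) = tstat w (xs @ [j, i] @ ys)"
  using assms
proof (induction ys arbitrary: w rule: rev_induct)
  case Nil
  have Rij: "(xs @ [i]) @ [j] \<in> reduced_words n w"
    using Nil.prems(2) by simp
  have Rji: "(xs @ [j]) @ [i] \<in> reduced_words n w"
    using comm_step_reduced_words[OF Nil.prems(2), of "xs @ [j, i]"] Nil.prems(3)
    by (auto simp: comm_step_def)
  have ij: "i \<in> Des w" "j \<in> Des w" "xs @ [i] \<in> reduced_words n (swap_at j w)"
    "xs @ [j] \<in> reduced_words n (swap_at i w)"
    using Rij Rji reduced_words_snoc_iff[OF Nil.prems(1)] by blast+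
  then have bounds: "1 \<le> i" "1 \<le> j" "i < length w" "j < length w"
    by (auto simp: Des_def)
  moreover have "is_perm n (swap_at j w)" "is_perm n (swap_at i w)"
    using Nil.prems(1) ij(1,2) by (simp_all add: is_perm_swap_at_Des)
  moreover have "swap_at i (swap_at j w) = swap_at j (swap_at i w)"
    using swap_at_commute bounds Nil.prems(3) by blast
  moreover have "larger_before (swap_at j w) (i - 1) = larger_before w (i - 1)"
    "larger_before (swap_at i w) (j - 1) = larger_before w (j - 1)"
    using larger_before_swap_at_far bounds Nil.prems(3) by auto
  ultimately show ?case
    using tstat_snoc[OF Nil.prems(1) Rij] tstat_snoc[OF Nil.prems(1) Rji] tstat_snoc ij(3,4)
    by simp
next
  case (snoc k ys)
  have R: "(xs @ [i, j] @ ys) @ [k] \<in> reduced_words n w"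
    "(xs @ [j, i] @ ys) @ [k] \<in> reduced_words n w"
    using snoc.prems comm_step_reduced_words[OF snoc.prems(2), of "xs @ [j, i] @ ys @ [k]"]
    by (auto simp: comm_step_def)
  then show ?case
    using tstat_snoc[OF snoc.prems(1) R(1)] tstat_snoc[OF snoc.prems(1) R(2)]
      snoc.IH[OF reduced_words_snocD(3,2)[OF snoc.prems(1) R(1)] snoc.prems(3)]
    by simp
qed

lemma comm_equiv_append: "comm_equiv a b \<Longrightarrow> comm_equiv (a @ c) (b @ c)"
  unfolding comm_equiv_def
  by (induction rule: rtranclp_induct) (auto intro: rtranclp.rtrancl_into_rtrancl comm_step_append)

lemma comm_equiv_sym: "comm_equiv a b \<Longrightarrow> comm_equiv b a"
  unfolding comm_equiv_def
  by (induction rule: rtranclp_induct) (auto intro: converse_rtranclp_into_rtranclp comm_step_sym)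

lemma comm_equiv_trans: "comm_equiv a b \<Longrightarrow> comm_equiv b c \<Longrightarrow> comm_equiv a c"
  unfolding comm_equiv_def by simp

lemma comm_equiv_swap_last: "i \<ge> j + 2 \<or> j \<ge> i + 2 \<Longrightarrow> comm_equiv (e @ [i, j]) (e @ [j, i])"
  unfolding comm_equiv_def comm_step_def
  by (rule r_into_rtranclp) (intro exI[of _ e] exI[of _ "[]"], auto)

lemma tstat_comm_equiv:
  assumes "is_perm n w" "a \<in> reduced_words n w" "comm_equiv a b"
  shows "b \<in> reduced_words n w" and "tstat w a = tstat w b"
proof -
  have "b \<in> reduced_words n w \<and> tstat w a = tstat w b"
    using assms(3) unfolding comm_equiv_def
  proof (induction rule: rtranclp_induct)
    case base
    then show ?case
      using assms(2) by simp
  next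
    case (step b c)
    then obtain xs ys i j where "i \<ge> j + 2 \<or> j \<ge> i + 2" "b = xs @ [i, j] @ ys" "c = xs @ [j, i] @ ys"
      unfolding comm_step_def by blast
    then show ?case
      using step comm_step_reduced_words tstat_comm[OF assms(1)] by metis
  qed
  then show "b \<in> reduced_words n w" and "tstat w a = tstat w b"
    by simp_all
qed

lemma tstat_braid:
  assumes w: "is_perm n w" and R: "e @ [D + 1, D, D + 1] \<in> reduced_words n w"
  shows "tstat w (e @ [D + 1, D, D + 1]) = tstat w (e @ [D, D + 1, D]) + 1"
proof -
  have R': "e @ [D, D + 1, D] \<in> reduced_words n w"
    using braid_step_reduced_words[OF R] unfolding braid_step_def by (metis append_Nil2)
  have "D + 1 \<in> Des w" "D \<in> Des w"
    using reduced_words_snocD(1)[OF w, of "e @ [D + 1, D]"] reduced_words_snocD(1)[OF w, of "e @ [D, D + 1]"]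
      R R' by simp_all
  then obtain m where m: "D - Suc 0 = m" "D = Suc m"
    by (cases D) (auto simp: Des_def)
  define p q r where "p = w ! m" and "q = w ! D" and "r = w ! (D + 1)"
  define w1 w2 where "w1 = swap_at (D + 1) w" and "w2 = swap_at D w1"
  define v1 v2 where "v1 = swap_at D w" and "v2 = swap_at (D + 1) v1"
  define above where "above x = card {z \<in> set (take m w). x < z}" for x
  have "length w = n" "distinct w" "D + 1 < n"
    using w \<open>D + 1 \<in> Des w\<close> by (auto simp: is_perm_def Des_def)
  then have "length w2 = n" "length v1 = n" "distinct w2" "distinct v1"
    using m by (simp_all add: w1_def w2_def v1_def)
  have "r < q" "q < p"
    using \<open>D + 1 \<in> Des w\<close> \<open>D \<in> Des w\<close> m by (simp_all add: Des_def p_def q_def r_def)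
  have entries: "w1 ! m = p" "w1 ! D = r" "w2 ! m = r" "w2 ! D = p"
    "v1 ! m = q" "v1 ! D = p" "v2 ! m = q" "v2 ! D = r"
    using m \<open>D + 1 < n\<close> \<open>length w = n\<close>
    by (auto simp: w1_def w2_def v1_def v2_def p_def q_def r_def nth_swap_at)
  have prefix: "take m w1 = take m w" "take m w2 = take m w" "take m v1 = take m w" "take m v2 = take m w"
    using m by (simp_all add: w1_def w2_def v1_def v2_def take_swap_at_le)
  have "larger_before w D = above q + 1" "larger_before w2 D = above p"
    "larger_before v1 D = above p"
    using larger_before_step[of w D] larger_before_step[of w2 D] larger_before_step[of v1 D]
      m(1) \<open>D \<in> Des w\<close> \<open>D + 1 < n\<close> \<open>length w = n\<close> \<open>length w2 = n\<close> \<open>length v1 = n\<close> \<open>distinct w\<close> \<open>distinct w2\<close>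
      \<open>distinct v1\<close> \<open>r < q\<close> \<open>q < p\<close>
    by (simp_all add: above_def entries prefix Des_def flip: p_def q_def)
  moreover have "larger_before w m = above p" "larger_before w1 m = above p"
    "larger_before v2 m = above q"
    using entries prefix by (simp_all add: above_def larger_before_def p_def)
  ultimately show ?thesis
    using tstat_snoc3[OF w R] tstat_snoc3[OF w R'] m(1)
    by (simp add: w1_def w2_def v1_def v2_def)
qed

section \<open>The words a_min and a_max\<close>

lemma upt_Suc_Cons_map: "[0..<Suc l] = 0 # map Suc [0..<l]"
  by (simp add: upt_conv_Cons map_Suc_upt del: upt_Suc)

lemma a_min_unfold:
  assumes "is_perm n w" "Des w \<noteq> {}"
  shows "a_min w = a_min (swap_at (Min (Des w)) w) @ [Min (Des w)]"
proof -
  have len: "len w = Suc (len (swap_at (Min (Des w)) w))"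
    using len_swap_at_Des[OF assms(1)] Min_in[OF finite_Des assms(2)] by blast
  have "amin_iter w (Suc j) = amin_iter (swap_at (Min (Des w)) w) j" for j
    by (simp add: amin_iter_def funpow_Suc_right del: funpow.simps)
  then show ?thesis
    unfolding a_min_def len upt_Suc_Cons_map by (simp add: o_def amin_iter_def[of _ 0])
qed

lemma a_max_unfold:
  assumes "is_perm n w" "Des w \<noteq> {}"
  shows "a_max w = a_max (swap_at (Max (Des w)) w) @ [Max (Des w)]"
proof -
  have len: "len w = Suc (len (swap_at (Max (Des w)) w))"
    using len_swap_at_Des[OF assms(1)] Max_in[OF finite_Des assms(2)] by blast
  have "amax_iter w (Suc j) = amax_iter (swap_at (Max (Des w)) w) j" for j
    by (simp add: amax_iter_def funpow_Suc_right del: funpow.simps)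
  then show ?thesis
    unfolding a_max_def len upt_Suc_Cons_map by (simp add: o_def amax_iter_def[of _ 0])
qed

lemma a_min_reduced_word: "is_perm n w \<Longrightarrow> a_min w \<in> reduced_words n w"
proof (induction "len w" arbitrary: w)
  case 0
  then have "Des w = {}"
    using Des_nonempty_iff_len[OF 0(2)] 0(1) by simp
  then show ?case
    using 0 Des_empty_imp_id_word Nil_in_reduced_words_iff by (simp add: a_min_def)
next
  case (Suc l)
  let ?d = "Min (Des w)"
  have "Des w \<noteq> {}"
    using Suc.hyps(2) Des_nonempty_iff_len[OF Suc.prems] by simp
  then have "?d \<in> Des w"
    using finite_Des by (rule Min_in[rotated])
  moreover from this have "is_perm n (swap_at ?d w)" "len (swap_at ?d w) = l"
    using Suc.prems Suc.hyps(2) len_swap_at_Des[OF Suc.prems] by (simp_all add: is_perm_swap_at_Des)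
  ultimately show ?case
    using Suc.hyps(1) a_min_unfold[OF Suc.prems \<open>Des w \<noteq> {}\<close>] reduced_words_snoc_iff[OF Suc.prems]
    by simp
qed

lemma a_max_reduced_word: "is_perm n w \<Longrightarrow> a_max w \<in> reduced_words n w"
proof (induction "len w" arbitrary: w)
  case 0
  then have "Des w = {}"
    using Des_nonempty_iff_len[OF 0(2)] 0(1) by simp
  then show ?case
    using 0 Des_empty_imp_id_word Nil_in_reduced_words_iff by (simp add: a_max_def)
next
  case (Suc l)
  let ?d = "Max (Des w)"
  have "Des w \<noteq> {}"
    using Suc.hyps(2) Des_nonempty_iff_len[OF Suc.prems] by simp
  then have "?d \<in> Des w"
    using finite_Des by (rule Max_in[rotated])
  moreover from this have "is_perm n (swap_at ?d w)" "len (swap_at ?d w) = l"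
    using Suc.prems Suc.hyps(2) len_swap_at_Des[OF Suc.prems] by (simp_all add: is_perm_swap_at_Des)
  ultimately show ?case
    using Suc.hyps(1) a_max_unfold[OF Suc.prems \<open>Des w \<noteq> {}\<close>] reduced_words_snoc_iff[OF Suc.prems]
    by simp
qed

lemma left_max_descent_swap_at:
  assumes "j \<in> Des v" "\<forall>i < j - 1. v ! i < v ! (j - 1)" "1 \<le> m" "m + 2 \<le> j"
  shows "j \<in> Des (swap_at m v)" and "\<forall>i < j - 1. swap_at m v ! i < swap_at m v ! (j - 1)"
proof -
  have "j < length v"
    using assms(1) by (simp add: Des_def)
  then show "j \<in> Des (swap_at m v)"
    using mem_Des_swap_at_far[of m v j] assms by simp
  have "swap_at m v ! (j - 1) = v ! (j - 1)" "swap_at m v ! i = v ! swap_index m i"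
    "swap_index m i < j - 1" if "i < j - 1" for i
    using that assms(3,4) \<open>j < length v\<close> by (auto simp: nth_swap_at swap_index_def)
  then show "\<forall>i < j - 1. swap_at m v ! i < swap_at m v ! (j - 1)"
    using assms(2) by simp
qed

lemma right_min_descent_swap_at:
  assumes "j \<in> Des v" "\<forall>i. j < i \<and> i < length v \<longrightarrow> v ! j < v ! i" "m < length v" "j + 2 \<le> m"
  shows "j \<in> Des (swap_at m v)"
    and "\<forall>i. j < i \<and> i < length (swap_at m v) \<longrightarrow> swap_at m v ! j < swap_at m v ! i"
proof -
  show "j \<in> Des (swap_at m v)"
    using mem_Des_swap_at_far[of m v j] assms by simp
  have "swap_at m v ! j = v ! j"
    using assms(3,4) by (auto simp: nth_swap_at)
  moreover have "swap_at m v ! i = v ! swap_index m i" "j < swap_index m i"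
    "swap_index m i < length v" if "j < i" "i < length v" for i
    using that assms(3,4) by (auto simp: nth_swap_at swap_index_def)
  ultimately show "\<forall>i. j < i \<and> i < length (swap_at m v) \<longrightarrow> swap_at m v ! j < swap_at m v ! i"
    using assms(2) by simp
qed

lemma a_min_comm_equiv_snoc:
  assumes "is_perm n v" "j \<in> Des v" "\<forall>i < j - 1. v ! i < v ! (j - 1)"
  shows "\<exists>e. comm_equiv (a_min v) (e @ [j])"
  using assms
proof (induction "len v" arbitrary: v)
  case 0
  then show ?case
    using Des_nonempty_iff_len[OF 0(2)] by auto
next
  case (Suc l)
  let ?m = "Min (Des v)"
  have "Des v \<noteq> {}"
    using Suc.prems(2) by blast
  then have m: "?m \<in> Des v" "?m \<le> j" and am: "a_min v = a_min (swap_at ?m v) @ [?m]"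
    using Min_in[OF finite_Des] Min_le[OF finite_Des Suc.prems(2)] a_min_unfold[OF Suc.prems(1)]
    by simp_all
  show ?case
  proof (cases "?m = j")
    case True
    then have "comm_equiv (a_min v) (a_min (swap_at ?m v) @ [j])"
      using am by (simp add: comm_equiv_def)
    then show ?thesis
      by blast
  next
    case False
    have "?m \<noteq> j - 1"
    proof
      assume "?m = j - 1"
      then have "v ! (j - 1) < v ! (j - 1 - 1)" "j - 1 - 1 < j - 1"
        using m(1) by (auto simp: Des_def)
      then show False
        using Suc.prems(3)[rule_format, of "j - 1 - 1"] by simp
    qed
    then have far: "?m + 2 \<le> j"
      using False m(2) by simp
    let ?v = "swap_at ?m v"
    have "is_perm n ?v" "len ?v = l"
      using Suc.prems(1) Suc.hyps(2) len_swap_at_Des[OF Suc.prems(1) m(1)] m(1)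
      by (simp_all add: is_perm_swap_at_Des)
    moreover have "j \<in> Des ?v" "\<forall>i < j - 1. ?v ! i < ?v ! (j - 1)"
      using left_max_descent_swap_at[OF Suc.prems(2,3) _ far] m(1) by (simp_all add: Des_def)
    ultimately obtain e where "comm_equiv (a_min ?v) (e @ [j])"
      using Suc.hyps(1) by blast
    then have "comm_equiv (a_min v) (e @ [j, ?m])"
      using am comm_equiv_append[of "a_min ?v" "e @ [j]" "[?m]"] by simp
    then have "comm_equiv (a_min v) ((e @ [?m]) @ [j])"
      using comm_equiv_swap_last[of ?m j e] far comm_equiv_trans by simp
    then show ?thesis
      by blast
  qed
qed

lemma a_max_comm_equiv_snoc:
  assumes "is_perm n v" "j \<in> Des v" "\<forall>i. j < i \<and> i < length v \<longrightarrow> v ! j < v ! i"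
  shows "\<exists>e. comm_equiv (a_max v) (e @ [j])"
  using assms
proof (induction "len v" arbitrary: v)
  case 0
  then show ?case
    using Des_nonempty_iff_len[OF 0(2)] by auto
next
  case (Suc l)
  let ?m = "Max (Des v)"
  have "Des v \<noteq> {}"
    using Suc.prems(2) by blast
  then have m: "?m \<in> Des v" "j \<le> ?m" and am: "a_max v = a_max (swap_at ?m v) @ [?m]"
    using Max_in[OF finite_Des] Max_ge[OF finite_Des Suc.prems(2)] a_max_unfold[OF Suc.prems(1)]
    by simp_all
  show ?case
  proof (cases "?m = j")
    case True
    then have "comm_equiv (a_max v) (a_max (swap_at ?m v) @ [j])"
      using am by (simp add: comm_equiv_def)
    then show ?thesis
      by blast
  next
    case False
    have m_bounds: "1 \<le> ?m" "?m < length v" "v ! ?m < v ! (?m - 1)"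
      using m(1) by (simp_all add: Des_def)
    have "?m \<noteq> j + 1"
      using Suc.prems(3)[rule_format, of "j + 1"] m_bounds by auto
    then have far: "j + 2 \<le> ?m"
      using False m(2) by simp
    let ?v = "swap_at ?m v"
    have "is_perm n ?v" "len ?v = l"
      using Suc.prems(1) Suc.hyps(2) len_swap_at_Des[OF Suc.prems(1) m(1)] m(1)
      by (simp_all add: is_perm_swap_at_Des)
    moreover have "j \<in> Des ?v" "\<forall>i. j < i \<and> i < length ?v \<longrightarrow> ?v ! j < ?v ! i"
      using right_min_descent_swap_at[OF Suc.prems(2,3) _ far] m_bounds by simp_all
    ultimately obtain e where "comm_equiv (a_max ?v) (e @ [j])"
      using Suc.hyps(1) by blast
    then have "comm_equiv (a_max v) (e @ [j, ?m])"
      using am comm_equiv_append[of "a_max ?v" "e @ [j]" "[?m]"] by simp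
    then have "comm_equiv (a_max v) ((e @ [?m]) @ [j])"
      using comm_equiv_swap_last[of ?m j e] far comm_equiv_trans by simp
    then show ?thesis
      by blast
  qed
qed

lemma a_min_swap_swap_comm_equiv:
  assumes w: "is_perm n w" and d: "Min (Des w) + 1 \<in> Des w"
  shows "\<exists>e. comm_equiv (a_min (swap_at (Min (Des w)) (swap_at (Min (Des w) + 1) w)))
    (e @ [Min (Des w) + 1])"
proof -
  let ?d = "Min (Des w)"
  let ?v = "swap_at ?d (swap_at (?d + 1) w)"
  have min: "?d \<in> Des w" "\<forall>l \<in> Des w. ?d \<le> l"
    using d finite_Des by (auto intro: Min_in)
  have "length w = n" "distinct w" "1 \<le> ?d" "?d + 1 < n"
    using w min(1) d by (auto simp: is_perm_def Des_def)
  then have "is_perm n ?v"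
    using w by (simp add: is_perm_swap_at)
  have v: "?v ! (?d - 1) = w ! (?d + 1)" "?v ! ?d = w ! (?d - 1)" "?v ! (?d + 1) = w ! ?d"
    "\<And>i. i < ?d - 1 \<Longrightarrow> ?v ! i = w ! i"
    using \<open>1 \<le> ?d\<close> \<open>?d + 1 < n\<close> \<open>length w = n\<close> by (auto simp: nth_swap_at)
  have "w ! (?d + 1) < w ! ?d" "w ! ?d < w ! (?d - 1)"
    using d min(1) by (simp_all add: Des_def)
  then have "?d + 1 \<in> Des ?v"
    using v \<open>?d + 1 < n\<close> \<open>length w = n\<close> by (simp add: Des_def)
  moreover have "?v ! i < ?v ! ?d" if "i < ?d + 1 - 1" for i
  proof (cases "i = ?d - 1")
    case False
    then have "w ! i < w ! (?d - 1)"
      using nth_less_of_no_Des[OF \<open>distinct w\<close>, of i "?d - 1"] min(2) that \<open>?d + 1 < n\<close>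
        \<open>length w = n\<close>
      by fastforce
    then show ?thesis
      using v False that by simp
  qed (use v \<open>w ! (?d + 1) < w ! ?d\<close> \<open>w ! ?d < w ! (?d - 1)\<close> in simp)
  ultimately show ?thesis
    using a_min_comm_equiv_snoc[OF \<open>is_perm n ?v\<close>] by force
qed

lemma a_max_swap_swap_comm_equiv:
  assumes w: "is_perm n w" and d: "Max (Des w) - 1 \<in> Des w"
  shows "\<exists>e. comm_equiv (a_max (swap_at (Max (Des w)) (swap_at (Max (Des w) - 1) w)))
    (e @ [Max (Des w) - 1])"
proof -
  let ?d = "Max (Des w)"
  have max: "?d \<in> Des w" "\<forall>l \<in> Des w. l \<le> ?d"
    using d finite_Des by (auto intro: Max_in)
  have "length w = n" "distinct w" "1 \<le> ?d - 1" "?d < n"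
    using w max(1) d by (auto simp: is_perm_def Des_def)
  define m where "m = ?d - 2"
  have m: "?d = m + 2"
    using \<open>1 \<le> ?d - 1\<close> by (simp add: m_def)
  let ?v = "swap_at (m + 2) (swap_at (m + 1) w)"
  have "is_perm n ?v"
    using w m \<open>?d < n\<close> by (simp add: is_perm_swap_at)
  have v: "?v ! m = w ! (m + 1)" "?v ! (m + 1) = w ! (m + 2)" "?v ! (m + 2) = w ! m"
    "\<And>i. m + 2 < i \<Longrightarrow> i < n \<Longrightarrow> ?v ! i = w ! i"
    using m \<open>?d < n\<close> \<open>length w = n\<close> by (auto simp: nth_swap_at)
  have "w ! (m + 2) < w ! (m + 1)" "w ! (m + 1) < w ! m"
    using d max(1) m by (simp_all add: Des_def)
  then have "m + 1 \<in> Des ?v"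
    using v m \<open>?d < n\<close> \<open>length w = n\<close> by (simp add: Des_def)
  moreover have "?v ! (m + 1) < ?v ! i" if "m + 1 < i" "i < length ?v" for i
  proof (cases "i = m + 2")
    case False
    then have "w ! (m + 2) < w ! i"
      using nth_less_of_no_Des[OF \<open>distinct w\<close>, of "m + 2" i] max(2) m that \<open>length w = n\<close>
      by force
    then show ?thesis
      using v False that \<open>length w = n\<close> by simp
  qed (use v \<open>w ! (m + 2) < w ! (m + 1)\<close> \<open>w ! (m + 1) < w ! m\<close> in simp)
  ultimately show ?thesis
    using a_max_comm_equiv_snoc[OF \<open>is_perm n ?v\<close>, of "m + 1"] m by (simp add: numeral_2_eq_2)
qed

section \<open>Climbing from a_min to a_max\<close>

definition climb :: "nat \<Rightarrow> nat list \<Rightarrow> nat list \<Rightarrow> nat list \<Rightarrow> bool" where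
  "climb n w a b \<longleftrightarrow> a \<in> reduced_words n w \<and>
    (comm_step a b \<or> braid_step a b \<and> tstat w b = tstat w a + 1)"

lemma climb_reduced_words: "climb n w a b \<Longrightarrow> b \<in> reduced_words n w"
  unfolding climb_def using comm_step_reduced_words braid_step_reduced_words by blast

lemma climbs_reduced_words:
  "(climb n w)\<^sup>*\<^sup>* a b \<Longrightarrow> a \<in> reduced_words n w \<Longrightarrow> b \<in> reduced_words n w"
  by (induction rule: rtranclp_induct) (auto dest: climb_reduced_words)

lemma climbs_reduced_words_source:
  "(climb n w)\<^sup>*\<^sup>* a b \<Longrightarrow> b \<in> reduced_words n w \<Longrightarrow> a \<in> reduced_words n w"
  by (induction rule: converse_rtranclp_induct) (auto simp: climb_def)

lemma comm_equiv_climbs: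
  assumes "a \<in> reduced_words n w" "comm_equiv a b"
  shows "(climb n w)\<^sup>*\<^sup>* a b"
  using assms(2) unfolding comm_equiv_def
proof (induction rule: rtranclp_induct)
  case (step b c)
  then have "climb n w b c"
    using climbs_reduced_words[OF step.IH assms(1)] by (simp add: climb_def)
  then show ?case
    by (rule rtranclp.rtrancl_into_rtrancl[OF step.IH])
qed simp

lemma climbs_snoc:
  assumes "is_perm n w" "k \<in> Des w" "(climb n (swap_at k w))\<^sup>*\<^sup>* a b"
  shows "(climb n w)\<^sup>*\<^sup>* (a @ [k]) (b @ [k])"
  using assms(3)
proof (induction rule: rtranclp_induct)
  case (step b c)
  have "b @ [k] \<in> reduced_words n w" "c @ [k] \<in> reduced_words n w"
    using step.hyps(2) climb_reduced_words reduced_words_snoc_iff[OF assms(1)] assms(2)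
    by (auto simp: climb_def)
  then have "climb n w (b @ [k]) (c @ [k])"
    using step.hyps(2) tstat_snoc[OF assms(1)] comm_step_append braid_step_append
    by (auto simp: climb_def)
  then show ?case
    by (rule rtranclp.rtrancl_into_rtrancl[OF step.IH])
qed simp

lemma climb_braid:
  assumes "is_perm n w" "e @ [D + 1, D, D + 1] \<in> reduced_words n w"
  shows "climb n w (e @ [D, D + 1, D]) (e @ [D + 1, D, D + 1])"
proof -
  have "braid_step (e @ [D, D + 1, D]) (e @ [D + 1, D, D + 1])"
    unfolding braid_step_def by (metis append_Nil2)
  then show ?thesis
    using braid_step_reduced_words[OF assms(2)] braid_step_sym tstat_braid[OF assms]
    by (auto simp: climb_def)
qed

lemma climbs_a_min_swap_snoc:
  assumes w: "is_perm n w" and k: "k \<in> Des w" and less: "Min (Des w) < k"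
  shows "\<exists>b. (climb n w)\<^sup>*\<^sup>* (b @ [Min (Des w)]) (a_min (swap_at k w) @ [k])"
proof -
  let ?d = "Min (Des w)" and ?w = "swap_at k w"
  let ?c = "a_min (swap_at ?d ?w)"
  have w': "is_perm n ?w"
    using w k by (rule is_perm_swap_at_Des)
  have am: "a_min ?w = ?c @ [?d]"
    using Min_Des_swap_at[OF k less] a_min_unfold[OF w'] by auto
  have Rc: "?c @ [?d, k] \<in> reduced_words n w"
    using reduced_words_snoc_iff[OF w, of "?c @ [?d]" k] a_min_reduced_word[OF w'] am k by simp
  show ?thesis
  proof (cases "?d + 1 < k")
    case True
    then have "comm_step (?c @ [k, ?d]) (?c @ [?d, k])"
      unfolding comm_step_def by (intro exI[of _ ?c] exI[of _ "[]"]) auto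
    then have "climb n w ((?c @ [k]) @ [?d]) (a_min ?w @ [k])"
      using comm_step_reduced_words[OF Rc] comm_step_sym am by (simp add: climb_def)
    then show ?thesis
      by blast
  next
    case False
    then have k_eq: "k = ?d + 1"
      using less by simp
    then obtain e where "comm_equiv ?c (e @ [?d + 1])"
      using a_min_swap_swap_comm_equiv[OF w] k by blast
    then have ce: "comm_equiv (?c @ [?d, ?d + 1]) (e @ [?d + 1, ?d, ?d + 1])"
      using comm_equiv_append by fastforce
    then have R: "e @ [?d + 1, ?d, ?d + 1] \<in> reduced_words n w"
      using tstat_comm_equiv(1)[OF w] Rc k_eq by simp
    then have "climb n w (e @ [?d, ?d + 1, ?d]) (e @ [?d + 1, ?d, ?d + 1])"
      by (rule climb_braid[OF w])
    moreover have "(climb n w)\<^sup>*\<^sup>* (e @ [?d + 1, ?d, ?d + 1]) (a_min ?w @ [k])"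
      using comm_equiv_climbs[OF R comm_equiv_sym[OF ce]] am k_eq by simp
    ultimately have "(climb n w)\<^sup>*\<^sup>* ((e @ [?d, ?d + 1]) @ [?d]) (a_min ?w @ [k])"
      by (simp add: converse_rtranclp_into_rtranclp)
    then show ?thesis
      by blast
  qed
qed

lemma climbs_a_max_swap_snoc:
  assumes w: "is_perm n w" and k: "k \<in> Des w" and less: "k < Max (Des w)"
  shows "\<exists>b. (climb n w)\<^sup>*\<^sup>* (a_max (swap_at k w) @ [k]) (b @ [Max (Des w)])"
proof -
  let ?d = "Max (Des w)" and ?w = "swap_at k w"
  let ?c = "a_max (swap_at ?d ?w)"
  have w': "is_perm n ?w"
    using w k by (rule is_perm_swap_at_Des)
  have am: "a_max ?w = ?c @ [?d]"
    using Max_Des_swap_at[OF k less] a_max_unfold[OF w'] by auto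
  have Rc: "?c @ [?d, k] \<in> reduced_words n w"
    using reduced_words_snoc_iff[OF w, of "?c @ [?d]" k] a_max_reduced_word[OF w'] am k by simp
  show ?thesis
  proof (cases "k + 1 < ?d")
    case True
    then have "comm_step (?c @ [?d, k]) (?c @ [k, ?d])"
      unfolding comm_step_def by (intro exI[of _ ?c] exI[of _ "[]"]) auto
    then have "climb n w (a_max ?w @ [k]) ((?c @ [k]) @ [?d])"
      using Rc am by (simp add: climb_def)
    then show ?thesis
      by blast
  next
    case False
    then have k_eq: "?d = k + 1"
      using less by simp
    then obtain e where "comm_equiv ?c (e @ [k])"
      using a_max_swap_swap_comm_equiv[OF w] k by auto
    then have ce: "comm_equiv (?c @ [?d, k]) (e @ [k, k + 1, k])"
      using comm_equiv_append k_eq by fastforce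
    then have R: "e @ [k, k + 1, k] \<in> reduced_words n w"
      using tstat_comm_equiv(1)[OF w] Rc by simp
    have "braid_step (e @ [k, k + 1, k]) (e @ [k + 1, k, k + 1])"
      unfolding braid_step_def by (metis append_Nil2)
    then have "climb n w (e @ [k, k + 1, k]) (e @ [k + 1, k, k + 1])"
      using climb_braid[OF w] braid_step_reduced_words[OF R] by blast
    moreover have "(climb n w)\<^sup>*\<^sup>* (a_max ?w @ [k]) (e @ [k, k + 1, k])"
      using comm_equiv_climbs[OF _ ce] Rc am k_eq by simp
    ultimately have "(climb n w)\<^sup>*\<^sup>* (a_max ?w @ [k]) ((e @ [k + 1, k]) @ [?d])"
      using k_eq by simp
    then show ?thesis
      by blast
  qed
qed

lemma a_min_climbs:
  assumes "is_perm n w" "a \<in> reduced_words n w"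
  shows "(climb n w)\<^sup>*\<^sup>* (a_min w) a"
  using assms
proof (induction "len w" arbitrary: w a)
  case 0
  then show ?case
    by (simp add: reduced_words_def a_min_def)
next
  case (Suc l)
  obtain a0 k where a: "a = a0 @ [k]"
    using Suc.hyps(2) Suc.prems(2) by (cases a rule: rev_cases) (auto simp: reduced_words_def)
  let ?d = "Min (Des w)"
  have k: "k \<in> Des w" "a0 \<in> reduced_words n (swap_at k w)"
    using reduced_words_snocD Suc.prems a by blast+
  have IH: "(climb n (swap_at j w))\<^sup>*\<^sup>* (a_min (swap_at j w)) b"
    if "j \<in> Des w" "b \<in> reduced_words n (swap_at j w)" for j b
    using Suc.hyps len_swap_at_Des[OF Suc.prems(1) that(1)] is_perm_swap_at_Des[OF Suc.prems(1)] that
    by simp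
  have d: "?d \<in> Des w" "?d \<le> k"
    using k(1) finite_Des by (auto intro: Min_in)
  obtain b where b: "(climb n w)\<^sup>*\<^sup>* (b @ [?d]) a"
  proof (cases "k = ?d")
    case True
    then show ?thesis
      using that a by blast
  next
    case False
    then obtain b where "(climb n w)\<^sup>*\<^sup>* (b @ [?d]) (a_min (swap_at k w) @ [k])"
      using climbs_a_min_swap_snoc[OF Suc.prems(1) k(1)] d(2) by force
    moreover have "(climb n w)\<^sup>*\<^sup>* (a_min (swap_at k w) @ [k]) a"
      using climbs_snoc[OF Suc.prems(1) k(1) IH[OF k]] a by simp
    ultimately show ?thesis
      using that by (meson rtranclp_trans)
  qed
  then have "b \<in> reduced_words n (swap_at ?d w)"
    using reduced_words_snoc_iff[OF Suc.prems(1)] climbs_reduced_words_source Suc.prems(2) by blast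
  then have "(climb n w)\<^sup>*\<^sup>* (a_min (swap_at ?d w) @ [?d]) (b @ [?d])"
    using climbs_snoc[OF Suc.prems(1) d(1) IH[OF d(1)]] by blast
  moreover have "a_min w = a_min (swap_at ?d w) @ [?d]"
    using a_min_unfold[OF Suc.prems(1)] k(1) by blast
  ultimately show ?case
    using b by (metis rtranclp_trans)
qed

lemma a_max_climbs:
  assumes "is_perm n w" "a \<in> reduced_words n w"
  shows "(climb n w)\<^sup>*\<^sup>* a (a_max w)"
  using assms
proof (induction "len w" arbitrary: w a)
  case 0
  then show ?case
    by (simp add: reduced_words_def a_max_def)
next
  case (Suc l)
  obtain a0 k where a: "a = a0 @ [k]"
    using Suc.hyps(2) Suc.prems(2) by (cases a rule: rev_cases) (auto simp: reduced_words_def)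
  let ?d = "Max (Des w)"
  have k: "k \<in> Des w" "a0 \<in> reduced_words n (swap_at k w)"
    using reduced_words_snocD Suc.prems a by blast+
  have IH: "(climb n (swap_at j w))\<^sup>*\<^sup>* b (a_max (swap_at j w))"
    if "j \<in> Des w" "b \<in> reduced_words n (swap_at j w)" for j b
    using Suc.hyps len_swap_at_Des[OF Suc.prems(1) that(1)] is_perm_swap_at_Des[OF Suc.prems(1)] that
    by simp
  have d: "?d \<in> Des w" "k \<le> ?d"
    using k(1) finite_Des by (auto intro: Max_in)
  obtain b where b: "(climb n w)\<^sup>*\<^sup>* a (b @ [?d])"
  proof (cases "k = ?d")
    case True
    then show ?thesis
      using that a by blast
  next
    case False
    then obtain b where "(climb n w)\<^sup>*\<^sup>* (a_max (swap_at k w) @ [k]) (b @ [?d])"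
      using climbs_a_max_swap_snoc[OF Suc.prems(1) k(1)] d(2) by force
    moreover have "(climb n w)\<^sup>*\<^sup>* a (a_max (swap_at k w) @ [k])"
      using climbs_snoc[OF Suc.prems(1) k(1) IH[OF k]] a by simp
    ultimately show ?thesis
      using that by (meson rtranclp_trans)
  qed
  then have "b \<in> reduced_words n (swap_at ?d w)"
    using reduced_words_snoc_iff[OF Suc.prems(1)] climbs_reduced_words Suc.prems(2) by blast
  then have "(climb n w)\<^sup>*\<^sup>* (b @ [?d]) (a_max (swap_at ?d w) @ [?d])"
    using climbs_snoc[OF Suc.prems(1) d(1) IH[OF d(1)]] by blast
  moreover have "a_max w = a_max (swap_at ?d w) @ [?d]"
    using a_max_unfold[OF Suc.prems(1)] k(1) by blast
  ultimately show ?case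
    using b by (metis rtranclp_trans)
qed

section \<open>The poset of commutation classes\<close>

lemma cclass_self: "a \<in> cclass a"
  by (simp add: cclass_def comm_equiv_def)

lemma cclass_eq: "comm_equiv a b \<Longrightarrow> cclass a = cclass b"
  unfolding cclass_def using comm_equiv_sym comm_equiv_trans by blast

lemma vertices_tstat:
  assumes "is_perm n w" "A \<in> vertices n w" "a \<in> A" "b \<in> A"
  shows "tstat w a = tstat w b"
proof -
  obtain c where "c \<in> reduced_words n w" "comm_equiv c a" "comm_equiv c b"
    using assms(2-4) by (auto simp: vertices_def cclass_def)
  then show ?thesis
    using tstat_comm_equiv(2)[OF assms(1)] by metis
qed

lemma cover_tstat:
  assumes "is_perm n w" "cover n w A B" "a \<in> A" "b \<in> B"
  shows "tstat w b = tstat w a + 1"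
  using assms vertices_tstat[OF assms(1)] unfolding cover_def by metis

lemma covers_tstat_less:
  assumes "is_perm n w" "(cover n w)\<^sup>+\<^sup>+ A B" "a \<in> A" "b \<in> B"
  shows "tstat w a < tstat w b"
  using assms(2-4)
proof (induction arbitrary: b rule: tranclp_induct)
  case (base B)
  then show ?case
    using cover_tstat[OF assms(1)] by fastforce
next
  case (step B C)
  obtain c where "c \<in> B"
    using step.hyps(2) cclass_self by (auto simp: cover_def vertices_def)
  then show ?case
    using step.IH[OF step.prems(1)] cover_tstat[OF assms(1) step.hyps(2) _ step.prems(2)] by fastforce
qed

lemma partial_order_tord:
  assumes "is_perm n w"
  shows "partial_order_on (vertices n w) (tord n w)"
proof -
  have "A = B" if AB: "(A, B) \<in> tord n w" "(B, A) \<in> tord n w" for A B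
  proof (rule ccontr)
    assume "A \<noteq> B"
    then have "(cover n w)\<^sup>+\<^sup>+ A B" "(cover n w)\<^sup>+\<^sup>+ B A"
      using AB by (auto simp: tord_def dest: rtranclpD)
    moreover obtain a b where "a \<in> A" "b \<in> B"
      using AB cclass_self by (auto simp: tord_def vertices_def)
    ultimately show False
      using covers_tstat_less[OF assms] by (meson less_asym)
  qed
  then show ?thesis
    unfolding partial_order_on_def preorder_on_def refl_on_def trans_def antisym_def
    by (auto simp: tord_def)
qed

lemma covers_in_tord_imp_cover:
  assumes "covers_in (vertices n w) (tord n w) A B"
  shows "cover n w A B"
proof -
  have AB: "(cover n w)\<^sup>*\<^sup>* A B" "A \<noteq> B"
    using assms by (auto simp: covers_in_def tord_def)
  then obtain C where C: "cover n w A C" "(cover n w)\<^sup>*\<^sup>* C B"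
    by (metis converse_rtranclpE)
  have "C \<noteq> A" "C \<in> vertices n w"
    using C(1) by (auto simp: cover_def adjacent_def)
  moreover from this have "(A, C) \<in> tord n w" "(C, B) \<in> tord n w"
    using assms C by (auto simp: covers_in_def tord_def)
  ultimately have "C = B"
    using assms unfolding covers_in_def by blast
  then show ?thesis
    using C(1) by simp
qed

lemma climbs_tord:
  assumes "is_perm n w" "a \<in> reduced_words n w" "(climb n w)\<^sup>*\<^sup>* a b"
  shows "(cclass a, cclass b) \<in> tord n w"
proof -
  have "(cover n w)\<^sup>*\<^sup>* (cclass a) (cclass b)"
    using assms(3)
  proof (induction rule: rtranclp_induct)
    case (step b c)
    have Rb: "b \<in> reduced_words n w" and Rc: "c \<in> reduced_words n w"
      using climbs_reduced_words[OF step.hyps(1) assms(2)] climb_reduced_words[OF step.hyps(2)]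
      by simp_all
    show ?case
    proof (cases "comm_step b c")
      case True
      then show ?thesis
        using step.IH cclass_eq[of b c] by (simp add: comm_equiv_def r_into_rtranclp)
    next
      case False
      then have braid: "braid_step b c" "tstat w c = tstat w b + 1"
        using step.hyps(2) by (auto simp: climb_def)
      have "cclass b \<noteq> cclass c"
      proof
        assume "cclass b = cclass c"
        then have "c \<in> cclass b"
          using cclass_self[of c] by simp
        then have "comm_equiv b c"
          by (simp add: cclass_def)
        then show False
          using braid(2) tstat_comm_equiv(2)[OF assms(1) Rb] by simp
      qed
      then have "cover n w (cclass b) (cclass c)"
        using Rb Rc braid cclass_self unfolding cover_def adjacent_def vertices_def by blast
      then show ?thesis
        by (rule rtranclp.rtrancl_into_rtrancl[OF step.IH])
    qed
  qed simp
  then show ?thesis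
    using assms climbs_reduced_words by (auto simp: tord_def vertices_def)
qed

lemma minimal_elts_eq_least:
  assumes "antisym r" "x \<in> V" "\<forall>y \<in> V. (x, y) \<in> r"
  shows "minimal_elts V r = {x}"
  using assms unfolding minimal_elts_def antisym_def by blast

lemma maximal_elts_eq_greatest:
  assumes "antisym r" "x \<in> V" "\<forall>y \<in> V. (y, x) \<in> r"
  shows "maximal_elts V r = {x}"
  using assms unfolding maximal_elts_def antisym_def by blast

lemma minimal_elts_tord:
  assumes "is_perm n w"
  shows "minimal_elts (vertices n w) (tord n w) = {cclass (a_min w)}"
proof (rule minimal_elts_eq_least)
  show "antisym (tord n w)"
    using partial_order_tord[OF assms] by (simp add: partial_order_on_def)
  show "cclass (a_min w) \<in> vertices n w"
    using a_min_reduced_word[OF assms] by (simp add: vertices_def)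
  show "\<forall>A \<in> vertices n w. (cclass (a_min w), A) \<in> tord n w"
    using climbs_tord[OF assms a_min_reduced_word[OF assms]] a_min_climbs[OF assms]
    by (auto simp: vertices_def)
qed

lemma maximal_elts_tord:
  assumes "is_perm n w"
  shows "maximal_elts (vertices n w) (tord n w) = {cclass (a_max w)}"
proof (rule maximal_elts_eq_greatest)
  show "antisym (tord n w)"
    using partial_order_tord[OF assms] by (simp add: partial_order_on_def)
  show "cclass (a_max w) \<in> vertices n w"
    using a_max_reduced_word[OF assms] by (simp add: vertices_def)
  show "\<forall>A \<in> vertices n w. (A, cclass (a_max w)) \<in> tord n w"
    using climbs_tord[OF assms] a_max_climbs[OF assms] by (auto simp: vertices_def)
qed

theorem mainTheorem8:
  fixes n :: nat and w :: "nat list"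
  assumes "is_perm n w"
  shows "(\<forall>a b. a \<in> reduced_words n w \<and> comm_equiv a b \<longrightarrow> tstat w a = tstat w b)
    \<and> partial_order_on (vertices n w) (tord n w)
    \<and> (\<forall>A B. covers_in (vertices n w) (tord n w) A B \<longrightarrow>
          (\<forall>a\<in>A. \<forall>b\<in>B. tstat w b = tstat w a + 1))
    \<and> minimal_elts (vertices n w) (tord n w) = {cclass (a_min w)}
    \<and> maximal_elts (vertices n w) (tord n w) = {cclass (a_max w)}"
  using tstat_comm_equiv(2)[OF assms] partial_order_tord[OF assms]
    cover_tstat[OF assms] covers_in_tord_imp_cover minimal_elts_tord[OF assms] maximal_elts_tord[OF assms]
  by blast

end
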